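(* For every $\mu\in P(\mathbb{R})$ we have $\operatorname{card}\big((\{\mu\}^1)^1\big)=1$ if and only if $\mu$ is a Dirac measure.
   Context: $P(\mathbb{R})$ is the set of Borel probability measures on $\mathbb{R}$, with the Kuiper distance $d_{Ku}(\mu,\nu)=\sup\{|\mu(I)-\nu(I)| : I\text{ a non-degenerate interval of }\mathbb{R}\}$. For $\mathcal{M}\subseteq P(\mathbb{R})$, $\mathcal{M}^1=\{\nu\in P(\mathbb{R}) : d_{Ku}(\mu,\nu)=1\text{ for all }\mu\in\mathcal{M}\}$. A Dirac measure is $\delta_x$, the probability measure concentrated at a point $x\in\mathbb{R}$. *)

theory Defs
  imports "HOL-Analysis.Analysis" "HOL-Probability.Probability"
begin

definition ProbR :: "real measure set" where
  "ProbR = {M. prob_space M \<and> sets M = sets borel}"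

definition nondeg_interval :: "real set \<Rightarrow> bool" where
  "nondeg_interval I \<longleftrightarrow> is_interval I \<and> (\<exists>a b. a \<in> I \<and> b \<in> I \<and> a < b)"

definition d_Ku :: "real measure \<Rightarrow> real measure \<Rightarrow> real" where
  "d_Ku \<mu> \<nu> = (SUP I \<in> {I. nondeg_interval I}. \<bar>measure \<mu> I - measure \<nu> I\<bar>)"

definition one_set :: "real measure set \<Rightarrow> real measure set" where
  "one_set \<M> = {\<nu> \<in> ProbR. \<forall>\<mu> \<in> \<M>. d_Ku \<mu> \<nu> = 1}"

definition is_dirac :: "real measure \<Rightarrow> bool" where
  "is_dirac \<mu> \<longleftrightarrow> (\<exists>x. \<mu> = return borel x)"

end

(* Every \<mu> lies in ({\<mu>}^1)^1.  If \<mu> is not a Dirac measure, some Borel set J has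
   0 < \<mu>(J) < 1, and \<mu> conditioned on J is a second element: its density with respect to \<mu>
   is bounded, and Kuiper distance 1 from \<mu> passes to measures with bounded density.
   Conversely, let \<rho> \<in> ({\<delta>\<^sub>x}^1)^1.  If \<rho>{x} < 1, then \<rho> conditioned on the complement
   of {x} has no atom at x, so it lies in {\<delta>\<^sub>x}^1; but its Kuiper distance to \<rho> is at most
   \<rho>{x} < 1, a contradiction.  Hence \<rho>{x} = 1, i.e. \<rho> = \<delta>\<^sub>x. *)

theory Submission
  imports Defs
begin

lemma ProbR_iff_real_distribution: "M \<in> ProbR \<longleftrightarrow> real_distribution M"
  unfolding ProbR_def real_distribution_def real_distribution_axioms_def by simp

lemma return_borel_in_ProbR: "return borel x \<in> ProbR"
  unfolding ProbR_def by (simp add: prob_space_return)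

lemma uniform_measure_in_ProbR:
  assumes "M \<in> ProbR" "A \<in> sets M" "measure M A > 0"
  shows "uniform_measure M A \<in> ProbR"
proof -
  interpret real_distribution M using assms(1) by (simp add: ProbR_iff_real_distribution)
  have "emeasure M A \<noteq> 0" "emeasure M A \<noteq> \<infinity>"
    using assms(3) by (simp_all add: emeasure_eq_measure)
  then show ?thesis
    unfolding ProbR_def by (simp add: prob_space_uniform_measure)
qed

lemma nondeg_interval_UNIV: "nondeg_interval (UNIV :: real set)"
  unfolding nondeg_interval_def by (metis UNIV_I is_interval_univ zero_less_one)

lemma nondeg_interval_sets_borel: "nondeg_interval I \<Longrightarrow> I \<in> sets borel"
  unfolding nondeg_interval_def by (simp add: real_interval_borel_measurable)

lemma d_Ku_commute: "d_Ku M N = d_Ku N M"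
  unfolding d_Ku_def by (simp add: abs_minus_commute)

lemma abs_measure_diff_le_1:
  assumes "prob_space M" "prob_space N"
  shows "\<bar>measure M A - measure N A\<bar> \<le> 1"
  using prob_space.prob_le_1[OF assms(1), of A] prob_space.prob_le_1[OF assms(2), of A]
    measure_nonneg[of M A] measure_nonneg[of N A] by linarith

lemma d_Ku_le:
  assumes "\<And>I. nondeg_interval I \<Longrightarrow> \<bar>measure M I - measure N I\<bar> \<le> c"
  shows "d_Ku M N \<le> c"
  unfolding d_Ku_def using assms nondeg_interval_UNIV by (intro cSUP_least) auto

lemma d_Ku_ge:
  assumes "prob_space M" "prob_space N" "nondeg_interval I"
  shows "\<bar>measure M I - measure N I\<bar> \<le> d_Ku M N"
  unfolding d_Ku_def using assms abs_measure_diff_le_1[OF assms(1,2)]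
  by (intro cSUP_upper bdd_aboveI2) auto

lemma d_Ku_eq_1_iff:
  assumes "prob_space M" "prob_space N"
  shows "d_Ku M N = 1 \<longleftrightarrow>
    (\<forall>e>0. \<exists>I. nondeg_interval I \<and> 1 - e < \<bar>measure M I - measure N I\<bar>)"
proof
  assume d: "d_Ku M N = 1"
  show "\<forall>e>0. \<exists>I. nondeg_interval I \<and> 1 - e < \<bar>measure M I - measure N I\<bar>"
  proof (intro allI impI)
    fix e :: real assume "e > 0"
    then have "1 - e < d_Ku M N" using d by simp
    then show "\<exists>I. nondeg_interval I \<and> 1 - e < \<bar>measure M I - measure N I\<bar>"
      unfolding d_Ku_def using nondeg_interval_UNIV abs_measure_diff_le_1[OF assms]
      by (subst (asm) less_cSUP_iff) (auto intro!: bdd_aboveI2)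
  qed
next
  assume close: "\<forall>e>0. \<exists>I. nondeg_interval I \<and> 1 - e < \<bar>measure M I - measure N I\<bar>"
  have "d_Ku M N \<le> 1"
    using abs_measure_diff_le_1[OF assms] by (intro d_Ku_le)
  moreover have "1 \<le> d_Ku M N"
  proof (rule field_le_epsilon)
    fix e :: real assume "e > 0"
    with close obtain I where "nondeg_interval I" "1 - e < \<bar>measure M I - measure N I\<bar>"
      by blast
    with d_Ku_ge[OF assms] show "1 \<le> d_Ku M N + e" by fastforce
  qed
  ultimately show "d_Ku M N = 1" by simp
qed

text \<open>An interval almost full for one of \<open>M\<close>, \<open>N\<close> is almost null for the other, and
  domination by \<open>M\<close> transfers almost-nullity of the interval or of its complement to \<open>R\<close>.\<close>

lemma d_Ku_eq_1_if_dominated: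
  assumes M: "M \<in> ProbR" and N: "N \<in> ProbR" and R: "R \<in> ProbR"
    and dom: "\<And>A. A \<in> sets borel \<Longrightarrow> measure R A \<le> c * measure M A"
    and "d_Ku M N = 1"
  shows "d_Ku R N = 1"
proof -
  interpret M: real_distribution M using M by (simp add: ProbR_iff_real_distribution)
  interpret N: real_distribution N using N by (simp add: ProbR_iff_real_distribution)
  interpret R: real_distribution R using R by (simp add: ProbR_iff_real_distribution)
  have "1 \<le> c" using dom[of UNIV] M.prob_space R.prob_space by simp
  have close: "\<exists>I. nondeg_interval I \<and> 1 - e < \<bar>measure M I - measure N I\<bar>" if "e > 0" for e
    using \<open>d_Ku M N = 1\<close> d_Ku_eq_1_iff[OF M.prob_space_axioms N.prob_space_axioms] that
    by blast
  show ?thesis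
    unfolding d_Ku_eq_1_iff[OF R.prob_space_axioms N.prob_space_axioms]
  proof (intro allI impI)
    fix e :: real assume "e > 0"
    define \<delta> where "\<delta> = e / (c + 1)"
    have "\<delta> > 0" "(c + 1) * \<delta> = e"
      using \<open>e > 0\<close> \<open>1 \<le> c\<close> by (simp_all add: \<delta>_def)
    then obtain I where I: "nondeg_interval I" "1 - \<delta> < \<bar>measure M I - measure N I\<bar>"
      using close by blast
    have "I \<in> sets borel" using I(1) by (rule nondeg_interval_sets_borel)
    then have compl: "measure M (UNIV - I) = 1 - measure M I" "measure R (UNIV - I) = 1 - measure R I"
      using M.prob_compl[of I] R.prob_compl[of I] by simp_all
    have "UNIV - I \<in> sets borel" using \<open>I \<in> sets borel\<close> by auto
    have "1 - e < \<bar>measure R I - measure N I\<bar>"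
    proof (cases "measure N I \<le> measure M I")
      case True
      then have "measure N I < \<delta>" "measure M (UNIV - I) < \<delta>"
        using I(2) compl M.prob_le_1[of I] measure_nonneg[of N I] by linarith+
      then have "measure R (UNIV - I) \<le> c * \<delta>"
        using \<open>1 \<le> c\<close>
        by (intro order_trans[OF dom[OF \<open>UNIV - I \<in> sets borel\<close>] mult_left_mono]) auto
      then show ?thesis
        using compl \<open>measure N I < \<delta>\<close> \<open>(c + 1) * \<delta> = e\<close>
        by (simp add: algebra_simps abs_if)
    next
      case False
      then have "measure M I < \<delta>" "1 - \<delta> < measure N I"
        using I(2) N.prob_le_1[of I] measure_nonneg[of M I] by linarith+
      then have "measure R I \<le> c * \<delta>"
        using \<open>1 \<le> c\<close>
        by (intro order_trans[OF dom[OF \<open>I \<in> sets borel\<close>] mult_left_mono]) auto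
      then show ?thesis
        using \<open>1 - \<delta> < measure N I\<close> \<open>(c + 1) * \<delta> = e\<close>
        by (simp add: algebra_simps abs_if)
    qed
    then show "\<exists>I. nondeg_interval I \<and> 1 - e < \<bar>measure R I - measure N I\<bar>"
      using I(1) by blast
  qed
qed

lemma (in finite_measure) measure_uniform_measure_le:
  assumes "A \<in> sets M" "measure M A > 0"
  shows "measure (uniform_measure M A) B \<le> measure M B / measure M A"
proof (cases "B \<in> sets M")
  case True
  have "emeasure M A \<noteq> 0" "emeasure M A \<noteq> \<infinity>"
    using assms(2) by (simp_all add: emeasure_eq_measure)
  then show ?thesis
    using True assms by (simp add: divide_right_mono finite_measure_mono)
next
  case False
  then show ?thesis by (simp add: measure_notin_sets)
qed

lemma (in prob_space) abs_measure_uniform_measure_diff_le: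
  assumes "A \<in> events" "prob A > 0"
  shows "\<bar>measure (uniform_measure M A) B - prob B\<bar> \<le> 1 - prob A"
proof (cases "B \<in> events")
  case True
  define t where "t = prob (A \<inter> B) / prob A"
  have "emeasure M A \<noteq> 0" "emeasure M A \<noteq> \<infinity>"
    using assms(2) by (simp_all add: emeasure_eq_measure)
  then have cond: "measure (uniform_measure M A) B = t"
    using True by (simp add: t_def)
  have "0 \<le> t" "t \<le> 1"
    using assms True by (auto simp: t_def divide_le_eq_1 finite_measure_mono)
  have split: "prob B = t * prob A + prob (B - A)"
    using assms True finite_measure_Diff'[of B A] by (simp add: t_def Int_commute)
  have "prob (B - A) \<le> prob (space M - A)"
    using assms True sets.sets_into_space by (auto intro!: finite_measure_mono)
  then have "prob (B - A) \<le> 1 - prob A"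
    using prob_compl[OF assms(1)] by simp
  moreover have "t - t * prob A = t * (1 - prob A)" by (simp add: algebra_simps)
  moreover have "t * (1 - prob A) \<le> 1 - prob A"
    using mult_right_mono[OF \<open>t \<le> 1\<close>, of "1 - prob A"] prob_le_1[of A] by simp
  ultimately show ?thesis
    unfolding cond split abs_le_iff using \<open>0 \<le> t\<close> prob_le_1[of A] measure_nonneg[of M "B - A"]
      mult_nonneg_nonneg[OF \<open>0 \<le> t\<close>, of "1 - prob A"]
    by linarith
next
  case False
  then show ?thesis using prob_le_1[of A] by (simp add: measure_notin_sets)
qed

lemma (in real_distribution) eq_return_if_prob_singleton_1:
  assumes "prob {x} = 1"
  shows "M = return borel x"
proof (rule measure_eqI)
  show "sets M = sets (return borel x)" by simp
  fix A assume A: "A \<in> sets M"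
  have "prob A = indicator A x"
  proof (cases "x \<in> A")
    case True
    then have "prob {x} \<le> prob A" using A by (intro finite_measure_mono) auto
    then show ?thesis using True assms prob_le_1[of A] by simp
  next
    case False
    then have "prob A \<le> prob (space M - {x})" using A by (intro finite_measure_mono) auto
    also have "\<dots> = 0" using prob_compl[of "{x}"] assms by simp
    finally show ?thesis using False measure_nonneg[of M A] by simp
  qed
  then show "emeasure M A = emeasure (return borel x) A"
    using A by (simp add: emeasure_eq_measure split: split_indicator)
qed

text \<open>A distribution taking only the values 0 and 1 is concentrated at the point where its
  distribution function jumps from 0 to 1.\<close>

lemma (in real_distribution) eq_return_if_zero_one:
  assumes zero_one: "\<And>A. A \<in> sets borel \<Longrightarrow> prob A = 0 \<or> prob A = 1"
  shows "\<exists>x. M = return borel x"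
proof -
  have cdf_01: "cdf M t = 0 \<or> cdf M t = 1" for t
    unfolding cdf_def by (rule zero_one) simp
  define S where "S = {t. cdf M t = 1}"
  obtain i where "cdf M (real i) > 1/2"
    using order_tendstoD(1)[OF cdf_lim_infty_prob, of "1/2"] eventually_sequentially by force
  then have "S \<noteq> {}" using cdf_01 unfolding S_def by force
  obtain j where j: "cdf M (- real j) < 1/2"
    using order_tendstoD(2)[OF cdf_lim_neg_infty, of "1/2"] eventually_sequentially by force
  have "- real j \<le> t" if "t \<in> S" for t
    using cdf_nondecreasing[of t "- real j"] that j unfolding S_def by fastforce
  then have "bdd_below S" by (rule bdd_belowI)
  define x where "x = Inf S"
  have "eventually (\<lambda>t. cdf M t = 1) (at_right x)"
  proof (rule eventually_at_right_less[THEN eventually_mono])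
    fix t assume "x < t"
    then obtain s where "s \<in> S" "s < t" using cInf_lessD[OF \<open>S \<noteq> {}\<close>] unfolding x_def by blast
    then show "cdf M t = 1"
      using cdf_nondecreasing[of s t] cdf_bounded_prob[of t] unfolding S_def by auto
  qed
  then have "cdf M x = 1"
    using cdf_is_right_cont[of x] unfolding continuous_within
    by (intro tendsto_unique[OF trivial_limit_at_right_real]) (auto intro: tendsto_eventually)
  moreover have "eventually (\<lambda>t. cdf M t = 0) (at_left x)"
  proof (rule eventually_at_left_real[of "x - 1" x, THEN eventually_mono])
    fix t assume "t \<in> {x - 1 <..< x}"
    then have "t < x" by simp
    then have "t \<notin> S" using cInf_lower[OF _ \<open>bdd_below S\<close>] unfolding x_def by force
    then show "cdf M t = 0" using cdf_01 unfolding S_def by auto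
  qed simp
  then have "prob {..<x} = 0"
    using cdf_at_left[of x]
    by (intro tendsto_unique[OF trivial_limit_at_left_real]) (auto intro: tendsto_eventually)
  moreover have "prob {..x} = prob {..<x} + prob {x}"
    by (subst finite_measure_Union[symmetric]) (auto simp: ivl_disj_un(2)[symmetric])
  ultimately have "prob {x} = 1" unfolding cdf_def by simp
  then show ?thesis using eq_return_if_prob_singleton_1 by auto
qed

text \<open>Short intervals around \<open>x\<close> are almost \<open>N\<close>-null, since the distribution function of
  \<open>N\<close> is continuous at \<open>x\<close>.\<close>

lemma d_Ku_return_eq_1:
  assumes N: "N \<in> ProbR" and "measure N {x} = 0"
  shows "d_Ku (return borel x) N = 1"
proof -
  interpret real_distribution N using N by (simp add: ProbR_iff_real_distribution)
  have "isCont (cdf N) x" using assms(2) by (simp add: isCont_cdf)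
  show ?thesis
    unfolding d_Ku_eq_1_iff[OF prob_space_return[of x borel] prob_space_axioms, simplified]
  proof (intro allI impI)
    fix e :: real assume "e > 0"
    then obtain s where "s > 0" and s: "\<And>y. y \<noteq> x \<Longrightarrow> \<bar>y - x\<bar> < s \<Longrightarrow> \<bar>cdf N y - cdf N x\<bar> < e / 2"
      using \<open>isCont (cdf N) x\<close> unfolding isCont_def LIM_eq by (metis real_norm_def half_gt_zero)
    define I where "I = {x - s / 2 <.. x + s / 2}"
    have "measure N I = cdf N (x + s / 2) - cdf N (x - s / 2)"
      unfolding I_def using \<open>s > 0\<close> by (simp add: cdf_diff_eq)
    also have "\<dots> < e"
      using s[of "x + s / 2"] s[of "x - s / 2"] \<open>s > 0\<close> unfolding abs_less_iff by simp
    finally have "measure N I < e" .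
    have "x \<in> I" "x + s / 2 \<in> I" "is_interval I"
      using \<open>s > 0\<close> by (simp_all add: I_def is_interval_oc)
    then have "nondeg_interval I"
      unfolding nondeg_interval_def using \<open>s > 0\<close> by (metis less_add_same_cancel1 half_gt_zero)
    moreover have "measure (return borel x) I = 1"
      using \<open>x \<in> I\<close> nondeg_interval_sets_borel[OF \<open>nondeg_interval I\<close>] by (simp add: measure_return)
    ultimately show "\<exists>I. nondeg_interval I \<and> 1 - e < \<bar>measure (return borel x) I - measure N I\<bar>"
      using \<open>measure N I < e\<close> measure_nonneg[of N I] by (intro exI[of _ I]) auto
  qed
qed

lemma mem_one_set_one_set: "\<mu> \<in> ProbR \<Longrightarrow> \<mu> \<in> one_set (one_set {\<mu>})"
  unfolding one_set_def by (auto simp: d_Ku_commute)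

lemma uniform_measure_mem_one_set_one_set:
  assumes \<mu>: "\<mu> \<in> ProbR" and "J \<in> sets borel" "measure \<mu> J > 0"
  shows "uniform_measure \<mu> J \<in> one_set (one_set {\<mu>})"
proof -
  interpret real_distribution \<mu> using \<mu> by (simp add: ProbR_iff_real_distribution)
  have cond: "uniform_measure \<mu> J \<in> ProbR"
    using assms by (intro uniform_measure_in_ProbR) auto
  have "measure (uniform_measure \<mu> J) A \<le> 1 / prob J * prob A" for A
    using measure_uniform_measure_le[of J A] assms by simp
  then have "d_Ku (uniform_measure \<mu> J) \<nu> = 1" if "\<nu> \<in> ProbR" "d_Ku \<mu> \<nu> = 1" for \<nu>
    using d_Ku_eq_1_if_dominated[OF \<mu> that(1) cond] that(2) by blast
  then show ?thesis
    using cond unfolding one_set_def by (auto simp: d_Ku_commute)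
qed

lemma one_set_one_set_return: "one_set (one_set {return borel x}) = {return borel x}"
proof (intro equalityI subsetI)
  fix \<rho> assume \<rho>: "\<rho> \<in> one_set (one_set {return borel x})"
  then have "\<rho> \<in> ProbR" unfolding one_set_def by simp
  then interpret real_distribution \<rho> by (simp add: ProbR_iff_real_distribution)
  have "prob {x} = 1"
  proof (rule ccontr)
    assume "prob {x} \<noteq> 1"
    define \<nu> where "\<nu> = uniform_measure \<rho> (- {x})"
    have "prob (- {x}) > 0"
      using prob_compl[of "{x}"] prob_le_1[of "{x}"] \<open>prob {x} \<noteq> 1\<close>
      by (simp add: Compl_eq_Diff_UNIV del: prob_le_1)
    then have "\<nu> \<in> ProbR"
      unfolding \<nu>_def using \<open>\<rho> \<in> ProbR\<close> by (intro uniform_measure_in_ProbR) auto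
    have "measure \<nu> {x} = 0" by (simp add: \<nu>_def measure_def)
    with \<open>\<nu> \<in> ProbR\<close> have "d_Ku (return borel x) \<nu> = 1" by (rule d_Ku_return_eq_1)
    then have "d_Ku \<nu> \<rho> = 1"
      using \<rho> \<open>\<nu> \<in> ProbR\<close> unfolding one_set_def by simp
    moreover have "d_Ku \<nu> \<rho> \<le> 1 - prob (- {x})"
      unfolding \<nu>_def using \<open>prob (- {x}) > 0\<close>
      by (intro d_Ku_le abs_measure_uniform_measure_diff_le) auto
    ultimately show False using \<open>prob (- {x}) > 0\<close> by simp
  qed
  then show "\<rho> \<in> {return borel x}" using eq_return_if_prob_singleton_1 by simp
qed (simp add: mem_one_set_one_set return_borel_in_ProbR)

theorem lemma3p1:
  assumes "\<mu> \<in> ProbR"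
  shows "card (one_set (one_set {\<mu>})) = 1 \<longleftrightarrow> is_dirac \<mu>"
proof
  assume card: "card (one_set (one_set {\<mu>})) = 1"
  show "is_dirac \<mu>"
  proof (rule ccontr)
    assume "\<not> is_dirac \<mu>"
    interpret real_distribution \<mu> using assms by (simp add: ProbR_iff_real_distribution)
    obtain J where J: "J \<in> sets borel" "0 < prob J" "prob J < 1"
      using eq_return_if_zero_one \<open>\<not> is_dirac \<mu>\<close> prob_le_1 measure_nonneg[of \<mu>]
      unfolding is_dirac_def by (metis order_le_less)
    have "emeasure \<mu> J \<noteq> 0" "emeasure \<mu> J \<noteq> \<infinity>" using J by (simp_all add: emeasure_eq_measure)
    then have "measure (uniform_measure \<mu> J) J \<noteq> prob J" using J by simp
    then have "uniform_measure \<mu> J \<noteq> \<mu>" by auto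
    moreover have "{uniform_measure \<mu> J, \<mu>} \<subseteq> one_set (one_set {\<mu>})"
      using uniform_measure_mem_one_set_one_set[OF assms J(1,2)] mem_one_set_one_set[OF assms]
      by simp
    ultimately show False using card by (metis card_1_singletonE insert_subset singletonD)
  qed
next
  assume "is_dirac \<mu>"
  then show "card (one_set (one_set {\<mu>})) = 1"
    unfolding is_dirac_def using one_set_one_set_return by auto
qed

end
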